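(* Let $\mathcal{X}$ and $\mathcal{Y}$ be finite sets, let $\Pr$ be a probability distribution on $\mathcal{X}$, let $\delta:\mathcal{X}\times\mathcal{Y}\to\mathbb{R}$, and let $\bar\pi,\pi_1,\dots,\pi_m$ be stochastic policies, each $\pi_i$ having support for $\bar\pi$ and satisfying $\sigma^2_\delta(\bar\pi\|\pi_i)>0$. Let $\mathcal{D}=\bigcup_{i=1}^m\mathcal{D}^i$ be a log dataset in which, for each $i$, $\mathcal{D}^i$ consists of $n_i$ samples $(x^i_j,y^i_j,\delta^i_j,p^i_j)$, $j=1,\dots,n_i$, with $x^i_j\sim\Pr$, $y^i_j\sim\pi_i(\cdot\mid x^i_j)$, $\delta^i_j=\delta(x^i_j,y^i_j)$, $p^i_j=\pi_i(y^i_j\mid x^i_j)$, all draws independent. For $\lambda=(\lambda_1,\dots,\lambda_m)$ with $\lambda_i\ge0$ and $\sum_i\lambda_in_i=1$ let $$\hat U_\lambda(\bar\pi)=\sum_{i=1}^m\lambda_i\sum_{j=1}^{n_i}\frac{\delta^i_j\,\bar\pi(y^i_j\mid x^i_j)}{p^i_j},$$ and let $\hat U_{weight}(\bar\pi)$ denote $\hat U_\lambda(\bar\pi)$ with $\lambda_i=\lambda_i^*=\Big(\sigma^2_\delta(\bar\pi\|\pi_i)\sum_{j=1}^m\frac{n_j}{\sigma^2_\delta(\bar\pi\|\pi_j)}\Big)^{-1}$. Then for every such $\lambda$, $$\mathrm{Var}_{\mathcal{D}}[\hat U_{weight}(\bar\pi)]=\frac{1}{\sum_{i=1}^m\frac{n_i}{\sigma^2_\delta(\bar\pi\|\pi_i)}}\le\mathrm{Var}_{\mathcal{D}}[\hat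 U_\lambda(\bar\pi)].$$
   Context: A stochastic policy $\pi$ assigns to each $x\in\mathcal{X}$ a probability distribution $\pi(\cdot\mid x)$ on $\mathcal{Y}$. The utility is $U(\pi)=\sum_{x,y}\Pr(x)\pi(y\mid x)\delta(x,y)$. A policy $\pi$ has support for $\pi'$ if $\delta(x,y)\pi'(y\mid x)\neq0$ implies $\pi(y\mid x)>0$ for all $x,y$. For $\pi$ having support for $\bar\pi$, the divergence is $\sigma^2_\delta(\bar\pi\|\pi)=\mathrm{Var}_{x\sim\Pr,\,y\sim\pi(\cdot\mid x)}\big[\delta(x,y)\bar\pi(y\mid x)/\pi(y\mid x)\big]=\sum_{x,y}\frac{(\delta(x,y)\bar\pi(y\mid x))^2}{\pi(y\mid x)}\Pr(x)-U(\bar\pi)^2$. Variances are over the random draw of $\mathcal{D}$. *)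

theory Defs
  imports "HOL-Probability.Probability"
begin

text \<open>A stochastic policy is a map x to a distribution on y; pi(y|x) = pmf (pi x) y.
  One logged sample: x drawn from Pr, then y drawn from pi(. | x).\<close>
definition sample_pmf :: "'x pmf \<Rightarrow> ('x \<Rightarrow> 'y pmf) \<Rightarrow> ('x \<times> 'y) pmf" where
  "sample_pmf Pr pol = bind_pmf Pr (\<lambda>x. map_pmf (\<lambda>y. (x, y)) (pol x))"

definition has_support :: "('x \<Rightarrow> 'y \<Rightarrow> real) \<Rightarrow> ('x \<Rightarrow> 'y pmf) \<Rightarrow> ('x \<Rightarrow> 'y pmf) \<Rightarrow> bool" where
  "has_support \<delta> pol pol' \<longleftrightarrow> (\<forall>x y. \<delta> x y * pmf (pol' x) y \<noteq> 0 \<longrightarrow> pmf (pol x) y > 0)"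

definition divergence :: "'x pmf \<Rightarrow> ('x \<Rightarrow> 'y \<Rightarrow> real) \<Rightarrow> ('x \<Rightarrow> 'y pmf) \<Rightarrow> ('x \<Rightarrow> 'y pmf) \<Rightarrow> real" where
  "divergence Pr \<delta> pibar pol =
     measure_pmf.variance (sample_pmf Pr pol)
       (\<lambda>(x, y). \<delta> x y * pmf (pibar x) y / pmf (pol x) y)"

definition dataset_pmf :: "'x pmf \<Rightarrow> (nat \<Rightarrow> 'x \<Rightarrow> 'y pmf) \<Rightarrow> nat \<Rightarrow> (nat \<Rightarrow> nat)
    \<Rightarrow> (nat \<times> nat \<Rightarrow> 'x \<times> 'y) pmf" where
  "dataset_pmf Pr pol m n =
     Pi_pmf {(i, j). i < m \<and> j < n i} undefined (\<lambda>(i, j). sample_pmf Pr (pol i))"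

definition U_hat :: "('x \<Rightarrow> 'y \<Rightarrow> real) \<Rightarrow> ('x \<Rightarrow> 'y pmf) \<Rightarrow> (nat \<Rightarrow> 'x \<Rightarrow> 'y pmf)
    \<Rightarrow> nat \<Rightarrow> (nat \<Rightarrow> nat) \<Rightarrow> (nat \<Rightarrow> real) \<Rightarrow> (nat \<times> nat \<Rightarrow> 'x \<times> 'y) \<Rightarrow> real" where
  "U_hat \<delta> pibar pol m n lam D =
     (\<Sum>i<m. lam i * (\<Sum>j<n i. (case D (i, j) of (x, y) \<Rightarrow>
        \<delta> x y * pmf (pibar x) y / pmf (pol i x) y)))"

definition weight_lambda :: "'x pmf \<Rightarrow> ('x \<Rightarrow> 'y \<Rightarrow> real) \<Rightarrow> ('x \<Rightarrow> 'y pmf)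
    \<Rightarrow> (nat \<Rightarrow> 'x \<Rightarrow> 'y pmf) \<Rightarrow> nat \<Rightarrow> (nat \<Rightarrow> nat) \<Rightarrow> nat \<Rightarrow> real" where
  "weight_lambda Pr \<delta> pibar pol m n i =
     1 / (divergence Pr \<delta> pibar (pol i) *
          (\<Sum>j<m. real (n j) / divergence Pr \<delta> pibar (pol j)))"

end

theory Submission imports Defs begin

text \<open>The dataset consists of independent samples, so the variance of the weighted estimator
  is the sum of the variances of its summands, giving
  \<open>Var[U_hat lam] = \<Sum>i. lam_i\<^sup>2 n_i \<sigma>\<^sub>i\<^sup>2\<close>. Minimising this quadratic form on the hyperplane
  \<open>\<Sum>i. lam_i n_i = 1\<close> is a weighted Cauchy-Schwarz problem: with \<open>S = \<Sum>i. n_i / \<sigma>\<^sub>i\<^sup>2\<close> one has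
  \<open>\<Sum>i. lam_i\<^sup>2 n_i \<sigma>\<^sub>i\<^sup>2 - 1/S = \<Sum>i. n_i \<sigma>\<^sub>i\<^sup>2 (lam_i - 1/(\<sigma>\<^sub>i\<^sup>2 S))\<^sup>2 \<ge> 0\<close>,
  with equality at the inverse-divergence weights.\<close>

lemma expectation_pair_pmf_mult:
  fixes f :: "'a \<Rightarrow> real" and g :: "'b \<Rightarrow> real"
  assumes "finite (set_pmf p)" "finite (set_pmf q)"
  shows "measure_pmf.expectation (pair_pmf p q) (\<lambda>z. f (fst z) * g (snd z))
       = measure_pmf.expectation p f * measure_pmf.expectation q g"
proof -
  have "measure_pmf.expectation (pair_pmf p q) (\<lambda>z. f (fst z) * g (snd z))
      = (\<Sum>z\<in>set_pmf p \<times> set_pmf q. f (fst z) * g (snd z) * pmf (pair_pmf p q) z)"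
    by (rule integral_measure_pmf_real) (use assms in auto)
  also have "\<dots> = (\<Sum>a\<in>set_pmf p. \<Sum>b\<in>set_pmf q. (f a * pmf p a) * (g b * pmf q b))"
    by (simp add: sum.cartesian_product, rule sum.cong) (auto simp: pmf_pair)
  also have "\<dots> = (\<Sum>a\<in>set_pmf p. f a * pmf p a) * (\<Sum>b\<in>set_pmf q. g b * pmf q b)"
    by (simp add: sum_product)
  also have "\<dots> = measure_pmf.expectation p f * measure_pmf.expectation q g"
    using assms by (simp add: integral_measure_pmf_real)
  finally show ?thesis .
qed

lemma variance_pair_pmf_add:
  fixes f :: "'a \<Rightarrow> real" and g :: "'b \<Rightarrow> real"
  assumes fin_p: "finite (set_pmf p)" and fin_q: "finite (set_pmf q)"
  shows "measure_pmf.variance (pair_pmf p q) (\<lambda>z. f (fst z) + g (snd z))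
       = measure_pmf.variance p f + measure_pmf.variance q g"
proof -
  have fin_pq: "finite (set_pmf (pair_pmf p q))" using fin_p fin_q by simp
  note integrable = integrable_measure_pmf_finite[OF fin_p] integrable_measure_pmf_finite[OF fin_q]
    integrable_measure_pmf_finite[OF fin_pq]
  define Ef where "Ef = measure_pmf.expectation p f"
  define Eg where "Eg = measure_pmf.expectation q g"
  have mean: "measure_pmf.expectation (pair_pmf p q) (\<lambda>z. f (fst z) + g (snd z)) = Ef + Eg"
    unfolding Ef_def Eg_def by (subst Bochner_Integration.integral_add) (auto intro: integrable)
  have centred: "measure_pmf.expectation p (\<lambda>a. f a - Ef) = 0"
    unfolding Ef_def by (subst Bochner_Integration.integral_diff) (auto intro: integrable)
  have cross: "measure_pmf.expectation (pair_pmf p q) (\<lambda>z. (f (fst z) - Ef) * (g (snd z) - Eg)) = 0"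
    using expectation_pair_pmf_mult[OF fin_p fin_q, of "\<lambda>a. f a - Ef" "\<lambda>b. g b - Eg"] centred
    by simp
  have square: "(f (fst z) + g (snd z) - (Ef + Eg))\<^sup>2
      = (f (fst z) - Ef)\<^sup>2 + (g (snd z) - Eg)\<^sup>2 + 2 * ((f (fst z) - Ef) * (g (snd z) - Eg))" for z
    by (simp add: power2_eq_square algebra_simps)
  have "measure_pmf.variance (pair_pmf p q) (\<lambda>z. f (fst z) + g (snd z))
      = measure_pmf.expectation (pair_pmf p q) (\<lambda>z. (f (fst z) - Ef)\<^sup>2)
        + measure_pmf.expectation (pair_pmf p q) (\<lambda>z. (g (snd z) - Eg)\<^sup>2)
        + 2 * measure_pmf.expectation (pair_pmf p q) (\<lambda>z. (f (fst z) - Ef) * (g (snd z) - Eg))"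
    unfolding mean square
    by (subst Bochner_Integration.integral_add integral_mult_right_zero; (intro integrable)?)+
       (rule refl)
  also have "\<dots> = measure_pmf.variance p f + measure_pmf.variance q g"
    unfolding cross
    using expectation_pair_pmf_fst[of p q "\<lambda>a. (f a - Ef)\<^sup>2"]
      expectation_pair_pmf_snd[of p q "\<lambda>b. (g b - Eg)\<^sup>2"]
    by (simp add: Ef_def Eg_def)
  finally show ?thesis .
qed

lemma variance_Pi_pmf_sum:
  fixes p :: "'k \<Rightarrow> 'a pmf" and h :: "'k \<Rightarrow> 'a \<Rightarrow> real"
  assumes "finite A" and "\<And>k. k \<in> A \<Longrightarrow> finite (set_pmf (p k))"
  shows "measure_pmf.variance (Pi_pmf A d p) (\<lambda>D. \<Sum>k\<in>A. h k (D k))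
       = (\<Sum>k\<in>A. measure_pmf.variance (p k) (h k))"
  using assms
proof (induction A rule: finite_induct)
  case empty
  then show ?case by simp
next
  case (insert x A)
  have fin_Pi: "finite (set_pmf (Pi_pmf A d p))"
    using insert by (auto simp: set_Pi_pmf)
  have split: "(\<Sum>k\<in>insert x A. h k ((case z of (y, f) \<Rightarrow> f(x := y)) k))
      = h x (fst z) + (\<Sum>k\<in>A. h k (snd z k))" for z
  proof -
    obtain y D where z: "z = (y, D)" by fastforce
    have "(\<Sum>k\<in>A. h k ((D(x := y)) k)) = (\<Sum>k\<in>A. h k (D k))"
      using insert.hyps by (intro sum.cong) auto
    then show ?thesis
      using insert.hyps by (simp add: z)
  qed
  have "measure_pmf.variance (Pi_pmf (insert x A) d p) (\<lambda>D. \<Sum>k\<in>insert x A. h k (D k))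
      = measure_pmf.variance (pair_pmf (p x) (Pi_pmf A d p))
          (\<lambda>z. h x (fst z) + (\<lambda>D. \<Sum>k\<in>A. h k (D k)) (snd z))"
    unfolding Pi_pmf_insert[OF insert.hyps] integral_map_pmf by (simp only: split)
  also have "\<dots> = measure_pmf.variance (p x) (h x)
      + measure_pmf.variance (Pi_pmf A d p) (\<lambda>D. \<Sum>k\<in>A. h k (D k))"
    using insert.prems fin_Pi by (intro variance_pair_pmf_add) auto
  also have "\<dots> = (\<Sum>k\<in>insert x A. measure_pmf.variance (p k) (h k))"
    using insert by simp
  finally show ?case .
qed

lemma variance_pmf_cmult:
  fixes g :: "'a \<Rightarrow> real"
  shows "measure_pmf.variance M (\<lambda>z. c * g z) = c\<^sup>2 * measure_pmf.variance M g"
proof -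
  have "measure_pmf.variance M (\<lambda>z. c * g z)
      = measure_pmf.expectation M (\<lambda>z. c\<^sup>2 * (g z - measure_pmf.expectation M g)\<^sup>2)"
    by (simp add: power2_eq_square algebra_simps)
  then show ?thesis by simp
qed

lemma variance_U_hat:
  fixes Pr :: "'x::finite pmf" and \<delta> :: "'x \<Rightarrow> 'y::finite \<Rightarrow> real"
    and pibar :: "'x \<Rightarrow> 'y pmf" and pol :: "nat \<Rightarrow> 'x \<Rightarrow> 'y pmf"
  shows "measure_pmf.variance (dataset_pmf Pr pol m n) (U_hat \<delta> pibar pol m n lam)
       = (\<Sum>i<m. (lam i)\<^sup>2 * real (n i) * divergence Pr \<delta> pibar (pol i))"
proof -
  define K where "K = {(i, j). i < m \<and> j < n i}"
  define w where "w i = (\<lambda>(x, y). \<delta> x y * pmf (pibar x) y / pmf (pol i x) y)" for i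
  have K_Sigma: "K = Sigma {..<m} (\<lambda>i. {..<n i})" unfolding K_def by auto
  have U: "U_hat \<delta> pibar pol m n lam = (\<lambda>D. \<Sum>k\<in>K. lam (fst k) * w (fst k) (D k))"
    unfolding U_hat_def w_def K_Sigma
    by (simp add: sum.Sigma sum_distrib_left case_prod_unfold)
  have "measure_pmf.variance (dataset_pmf Pr pol m n) (U_hat \<delta> pibar pol m n lam)
      = (\<Sum>k\<in>K. measure_pmf.variance ((\<lambda>(i, j). sample_pmf Pr (pol i)) k)
                   (\<lambda>z. lam (fst k) * w (fst k) z))"
    unfolding U dataset_pmf_def K_def[symmetric]
    by (rule variance_Pi_pmf_sum) (simp_all add: K_Sigma)
  also have "\<dots> = (\<Sum>(i, j)\<in>Sigma {..<m} (\<lambda>i. {..<n i}). (lam i)\<^sup>2 * divergence Pr \<delta> pibar (pol i))"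
    unfolding K_Sigma variance_pmf_cmult divergence_def w_def by (simp add: case_prod_unfold)
  also have "\<dots> = (\<Sum>i<m. (lam i)\<^sup>2 * real (n i) * divergence Pr \<delta> pibar (pol i))"
    by (subst sum.Sigma[symmetric]) (auto simp: algebra_simps)
  finally show ?thesis .
qed

lemma weighted_sum_squares_inverse_weights:
  fixes c v :: "'i \<Rightarrow> real"
  assumes "\<And>i. i \<in> I \<Longrightarrow> v i > 0"
  defines "S \<equiv> \<Sum>i\<in>I. c i / v i"
  shows "(\<Sum>i\<in>I. (1 / (v i * S))\<^sup>2 * c i * v i) = 1 / S"
proof -
  have "(\<Sum>i\<in>I. (1 / (v i * S))\<^sup>2 * c i * v i) = (\<Sum>i\<in>I. (c i / v i) / S\<^sup>2)"
    using assms by (intro sum.cong refl) (simp add: power2_eq_square field_simps)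
  also have "\<dots> = S / S\<^sup>2" by (simp add: S_def sum_divide_distrib)
  finally show ?thesis by (simp add: power2_eq_square)
qed

lemma weighted_sum_squares_ge:
  fixes c v lam :: "'i \<Rightarrow> real"
  assumes c_nonneg: "\<And>i. i \<in> I \<Longrightarrow> c i \<ge> 0" and v_pos: "\<And>i. i \<in> I \<Longrightarrow> v i > 0"
    and normalised: "(\<Sum>i\<in>I. lam i * c i) = 1"
  defines "S \<equiv> \<Sum>i\<in>I. c i / v i"
  shows "1 / S \<le> (\<Sum>i\<in>I. (lam i)\<^sup>2 * c i * v i)"
proof -
  have "finite I"
    using normalised sum.infinite by fastforce
  have "S \<noteq> 0"
  proof
    assume "S = 0"
    then have "\<forall>i\<in>I. c i / v i = 0"
      using \<open>finite I\<close> c_nonneg v_pos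
      by (subst sum_nonneg_eq_0_iff[symmetric]) (auto simp: S_def less_imp_le)
    then have "\<forall>i\<in>I. c i = 0" using v_pos by (metis divide_eq_0_iff order_less_irrefl)
    with normalised show False by simp
  qed
  have square: "c i * v i * (lam i - 1 / (v i * S))\<^sup>2
      = (lam i)\<^sup>2 * c i * v i - 2 * (lam i * c i) / S + (c i / v i) / S\<^sup>2" if "i \<in> I" for i
    using v_pos[OF that] \<open>S \<noteq> 0\<close> by (simp add: power2_eq_square field_simps)
  have "0 \<le> (\<Sum>i\<in>I. c i * v i * (lam i - 1 / (v i * S))\<^sup>2)"
    using c_nonneg v_pos by (intro sum_nonneg) (simp add: less_imp_le)
  also have "\<dots> = (\<Sum>i\<in>I. (lam i)\<^sup>2 * c i * v i - 2 * (lam i * c i) / S + (c i / v i) / S\<^sup>2)"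
    using square by (intro sum.cong) simp_all
  also have "\<dots> = (\<Sum>i\<in>I. (lam i)\<^sup>2 * c i * v i)
      - 2 * (\<Sum>i\<in>I. lam i * c i) / S + S / S\<^sup>2"
    by (simp add: S_def sum.distrib sum_subtractf sum_divide_distrib sum_distrib_left)
  also have "\<dots> = (\<Sum>i\<in>I. (lam i)\<^sup>2 * c i * v i) - 1 / S"
    unfolding normalised by (simp add: power2_eq_square)
  finally show ?thesis by simp
qed

theorem theorem6p4:
  fixes Pr :: "'x::finite pmf"
    and \<delta> :: "'x \<Rightarrow> 'y::finite \<Rightarrow> real"
    and pibar :: "'x \<Rightarrow> 'y pmf"
    and pol :: "nat \<Rightarrow> 'x \<Rightarrow> 'y pmf"
    and m :: nat and n :: "nat \<Rightarrow> nat"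
  assumes supp: "\<And>i. i < m \<Longrightarrow> has_support \<delta> (pol i) pibar"
    and pos: "\<And>i. i < m \<Longrightarrow> divergence Pr \<delta> pibar (pol i) > 0"
  shows "measure_pmf.variance (dataset_pmf Pr pol m n)
            (U_hat \<delta> pibar pol m n (weight_lambda Pr \<delta> pibar pol m n))
          = 1 / (\<Sum>i<m. real (n i) / divergence Pr \<delta> pibar (pol i))
       \<and> (\<forall>lam :: nat \<Rightarrow> real.
            (\<forall>i<m. lam i \<ge> 0) \<and> (\<Sum>i<m. lam i * real (n i)) = 1 \<longrightarrow>
            1 / (\<Sum>i<m. real (n i) / divergence Pr \<delta> pibar (pol i))
              \<le> measure_pmf.variance (dataset_pmf Pr pol m n) (U_hat \<delta> pibar pol m n lam))"
proof -
  have v_pos: "\<And>i. i \<in> {..<m} \<Longrightarrow> divergence Pr \<delta> pibar (pol i) > 0"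
    using pos by simp
  have "measure_pmf.variance (dataset_pmf Pr pol m n)
          (U_hat \<delta> pibar pol m n (weight_lambda Pr \<delta> pibar pol m n))
        = 1 / (\<Sum>i<m. real (n i) / divergence Pr \<delta> pibar (pol i))"
    unfolding variance_U_hat weight_lambda_def
    by (rule weighted_sum_squares_inverse_weights[OF v_pos])
  moreover have "1 / (\<Sum>i<m. real (n i) / divergence Pr \<delta> pibar (pol i))
      \<le> measure_pmf.variance (dataset_pmf Pr pol m n) (U_hat \<delta> pibar pol m n lam)"
    if "(\<Sum>i<m. lam i * real (n i)) = 1" for lam
    unfolding variance_U_hat by (rule weighted_sum_squares_ge[OF _ v_pos that]) simp
  ultimately show ?thesis by blast
qed

end
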